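(* Let $n\ge 2$, let $\rho>0$ and let $d_1,\dots,d_n>0$. Let $W=(w_{ij})$ be the $n\times n$ matrix with $w_{ij}=1/d_{\min(i,j)}$, let $\mathbf 1\in\mathbb R^n$ be the column vector of ones, and set $M=W-\frac{1}{\rho}\mathbf 1\mathbf 1^T$. If there exist indices $j<k$ with $d_k>d_j$, then $M$ is not positive semidefinite.
   Context: Interpretation: $d_i$ is the density of the cargo placed in the $i$-th position from the bottom of a vessel and $\rho$ is the water density; the hypothesis says some cargo is placed above a cargo of lower density. *)

theory Defs
  imports Complex_Main
begin

definition psd :: "nat \<Rightarrow> (nat \<Rightarrow> nat \<Rightarrow> real) \<Rightarrow> bool" where
  "psd n A \<longleftrightarrow> (\<forall>x :: nat \<Rightarrow> real. 0 \<le> (\<Sum>i=1..n. \<Sum>j=1..n. x i * A i j * x j))"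

end

theory Submission
  imports Defs
begin

text \<open>Test the quadratic form on \<open>e\<^sub>j - e\<^sub>k\<close>. This vector is orthogonal to the
  all-ones vector, so the rank-one term \<open>1/\<rho>\<close> drops out, and what remains is
  \<open>1/d\<^sub>j - 2/d\<^sub>j + 1/d\<^sub>k = 1/d\<^sub>k - 1/d\<^sub>j < 0\<close>.\<close>

lemma quadratic_form_unit_diff:
  fixes A :: "nat \<Rightarrow> nat \<Rightarrow> real"
  assumes "j \<in> {1..n}" "k \<in> {1..n}" "j \<noteq> k"
  defines "x \<equiv> \<lambda>l. (if l = j then 1 else 0) - (if l = k then 1 else 0 :: real)"
  shows "(\<Sum>i=1..n. \<Sum>l=1..n. x i * A i l * x l) = A j j - A j k - A k j + A k k"
proof -
  have row: "(\<Sum>l=1..n. x i * A i l * x l) = x i * (A i j - A i k)" for i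
    using assms(1-3)
    by (simp add: x_def right_diff_distrib sum_subtractf if_distrib[of "times _"] cong: if_cong)
  have "(\<Sum>i=1..n. \<Sum>l=1..n. x i * A i l * x l) = (\<Sum>i=1..n. x i * (A i j - A i k))"
    by (simp only: row)
  also have "\<dots> = A j j - A j k - A k j + A k k"
    using assms(1-3)
    by (simp add: x_def left_diff_distrib sum_subtractf if_distrib[of "\<lambda>t. t * _"] cong: if_cong)
  finally show ?thesis .
qed

lemma psd_imp_unit_diff_nonneg:
  assumes "psd n A" "j \<in> {1..n}" "k \<in> {1..n}" "j \<noteq> k"
  shows "0 \<le> A j j - A j k - A k j + A k k"
proof -
  let ?x = "\<lambda>l. (if l = j then 1 else 0) - (if l = k then 1 else 0 :: real)"
  have "0 \<le> (\<Sum>i=1..n. \<Sum>l=1..n. ?x i * A i l * ?x l)"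
    using assms(1) unfolding psd_def by (rule spec)
  then show ?thesis
    unfolding quadratic_form_unit_diff[OF assms(2-4)] .
qed

theorem mainTheorem2:
  fixes n :: nat and \<rho> :: real and d :: "nat \<Rightarrow> real"
  assumes "n \<ge> 2" and "\<rho> > 0"
    and "\<forall>i\<in>{1..n}. d i > 0"
    and "\<exists>j k. 1 \<le> j \<and> j < k \<and> k \<le> n \<and> d k > d j"
  shows "\<not> psd n (\<lambda>i j. 1 / d (min i j) - 1 / \<rho>)"
proof
  assume psd: "psd n (\<lambda>i j. 1 / d (min i j) - 1 / \<rho>)"
  obtain j k where jk: "1 \<le> j" "j < k" "k \<le> n" "d j < d k"
    using assms(4) by blast
  have "0 \<le> 1 / d k - 1 / d j"
    using psd_imp_unit_diff_nonneg[OF psd, of j k] jk by (simp add: min_def)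
  moreover have "1 / d k < 1 / d j"
    using assms(3) jk by (simp add: frac_less2)
  ultimately show False by simp
qed

end
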